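(* Let $\mathbb{C},\mathbb{D}$ be squares categories and $F,G:\mathbb{C}\to\mathbb{D}$ functors of squares categories. The components of any vertical natural transformation $\eta:F\Rightarrow G$ are vertical weak equivalences in $\mathbb{D}$, and the components of any horizontal natural transformation $\eta:F\Rightarrow G$ are horizontal weak equivalences in $\mathbb{D}$.
   Context: A squares category is a flat double category (squares uniquely determined by their boundary; we say a boundary "is a square") with a distinguished object $O$ initial in the horizontal category (morphisms $\rightarrowtail$) and terminal in the vertical category (morphisms $\twoheadrightarrow$); a functor of squares categories is a double functor preserving $O$. A vertical $f:A\twoheadrightarrow B$ is a vertical weak equivalence if the boundary (top $O\rightarrowtail A$, left $\mathrm{id}_O$, right $f$, bottom $O\rightarrowtail B$) is a square; a horizontal $g:A\rightarrowtail B$ is a horizontal weak equivalence if the boundary (top $g$, left $A\twoheadrightarrow O$, right $B\twoheadrightarrow O$, bottom $\mathrm{id}_O$) is a square. A vertical natural transformation $\eta:F\Rightarrow G$ consists of vertical morphisms $\eta_A:F(A)\twoheadrightarrow G(A)$ such that for every horizontal $f:A\rightarrowtail A'$ the boundary with top $Ff$, left $\eta_A$, right $\eta_{A'}$, bottom $Gf$ is a square, and for every vertical $u:A\twoheadrightarrow A'$, $\eta_{A'}\circ Fu=Gu\circ\eta_A$. Dually, a horizontal natural transformation consists of horizontal morphisms $\eta_A:F(A)\rightarrowtail G(A)$ such that for every vertical $u:A\twoheadrightarrow A'$ the boundary with top $\eta_A$, left $Fu$, right $Gu$, bottom $\eta_{A'}$ is a square, and $\eta_{A'}\circ Ff=Gf\circ\eta_A$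 for every horizontal $f$. *)

theory Defs
  imports Main
begin

definition is_category ::
  "'o set \<Rightarrow> 'm set \<Rightarrow> ('m \<Rightarrow> 'o) \<Rightarrow> ('m \<Rightarrow> 'o) \<Rightarrow> ('m \<Rightarrow> 'm \<Rightarrow> 'm) \<Rightarrow> ('o \<Rightarrow> 'm) \<Rightarrow> bool"
  where
  "is_category Ob M dm cd cmp idm \<longleftrightarrow>
     (\<forall>f\<in>M. dm f \<in> Ob \<and> cd f \<in> Ob) \<and>
     (\<forall>A\<in>Ob. idm A \<in> M \<and> dm (idm A) = A \<and> cd (idm A) = A) \<and>
     (\<forall>f\<in>M. \<forall>g\<in>M. cd f = dm g \<longrightarrow>
         cmp g f \<in> M \<and> dm (cmp g f) = dm f \<and> cd (cmp g f) = cd g) \<and>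
     (\<forall>f\<in>M. cmp f (idm (dm f)) = f \<and> cmp (idm (cd f)) f = f) \<and>
     (\<forall>f\<in>M. \<forall>g\<in>M. \<forall>h\<in>M. cd f = dm g \<longrightarrow> cd g = dm h \<longrightarrow>
         cmp h (cmp g f) = cmp (cmp h g) f)"

text \<open>Composition convention: hcomp g f is "g after f" (f first), likewise vcomp.
  Sq t l r b means: the boundary with top t, left l, right r, bottom b is a square,
  where t : dom l >-> dom r and b : cod l >-> cod r.\<close>

record ('o, 'h, 'v) sqcat =
  Ob    :: "'o set"
  Hor   :: "'h set"
  hdom  :: "'h \<Rightarrow> 'o"
  hcod  :: "'h \<Rightarrow> 'o"
  hcomp :: "'h \<Rightarrow> 'h \<Rightarrow> 'h"
  hid   :: "'o \<Rightarrow> 'h"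
  Ver   :: "'v set"
  vdom  :: "'v \<Rightarrow> 'o"
  vcod  :: "'v \<Rightarrow> 'o"
  vcomp :: "'v \<Rightarrow> 'v \<Rightarrow> 'v"
  vid   :: "'o \<Rightarrow> 'v"
  Sq    :: "'h \<Rightarrow> 'v \<Rightarrow> 'v \<Rightarrow> 'h \<Rightarrow> bool"
  Zero  :: "'o"

definition squares_category :: "('o, 'h, 'v) sqcat \<Rightarrow> bool" where
  "squares_category C \<longleftrightarrow>
     is_category (Ob C) (Hor C) (hdom C) (hcod C) (hcomp C) (hid C) \<and>
     is_category (Ob C) (Ver C) (vdom C) (vcod C) (vcomp C) (vid C) \<and>
     \<comment> \<open>boundaries of squares are well formed\<close>
     (\<forall>t l r b. Sq C t l r b \<longrightarrow>
        t \<in> Hor C \<and> b \<in> Hor C \<and> l \<in> Ver C \<and> r \<in> Ver C \<and>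
        hdom C t = vdom C l \<and> hcod C t = vdom C r \<and>
        hdom C b = vcod C l \<and> hcod C b = vcod C r) \<and>
     \<comment> \<open>identity squares\<close>
     (\<forall>v\<in>Ver C. Sq C (hid C (vdom C v)) v v (hid C (vcod C v))) \<and>
     (\<forall>h\<in>Hor C. Sq C h (vid C (hdom C h)) (vid C (hcod C h)) h) \<and>
     \<comment> \<open>horizontal composition of squares\<close>
     (\<forall>t1 l m b1 t2 r b2. Sq C t1 l m b1 \<longrightarrow> Sq C t2 m r b2 \<longrightarrow>
        Sq C (hcomp C t2 t1) l r (hcomp C b2 b1)) \<and>
     \<comment> \<open>vertical composition of squares\<close>
     (\<forall>t l1 r1 m l2 r2 b. Sq C t l1 r1 m \<longrightarrow> Sq C m l2 r2 b \<longrightarrow>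
        Sq C t (vcomp C l2 l1) (vcomp C r2 r1) b) \<and>
     \<comment> \<open>distinguished object O: initial horizontally, terminal vertically\<close>
     Zero C \<in> Ob C \<and>
     (\<forall>A\<in>Ob C. \<exists>!f. f \<in> Hor C \<and> hdom C f = Zero C \<and> hcod C f = A) \<and>
     (\<forall>A\<in>Ob C. \<exists>!f. f \<in> Ver C \<and> vdom C f = A \<and> vcod C f = Zero C)"

definition init_h :: "('o, 'h, 'v) sqcat \<Rightarrow> 'o \<Rightarrow> 'h" where
  "init_h C A = (THE f. f \<in> Hor C \<and> hdom C f = Zero C \<and> hcod C f = A)"

definition term_v :: "('o, 'h, 'v) sqcat \<Rightarrow> 'o \<Rightarrow> 'v" where
  "term_v C A = (THE f. f \<in> Ver C \<and> vdom C f = A \<and> vcod C f = Zero C)"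

definition vertical_weq :: "('o, 'h, 'v) sqcat \<Rightarrow> 'v \<Rightarrow> bool" where
  "vertical_weq C f \<longleftrightarrow> f \<in> Ver C \<and>
     Sq C (init_h C (vdom C f)) (vid C (Zero C)) f (init_h C (vcod C f))"

definition horizontal_weq :: "('o, 'h, 'v) sqcat \<Rightarrow> 'h \<Rightarrow> bool" where
  "horizontal_weq C g \<longleftrightarrow> g \<in> Hor C \<and>
     Sq C g (term_v C (hdom C g)) (term_v C (hcod C g)) (hid C (Zero C))"

definition sq_functor ::
  "('o1, 'h1, 'v1) sqcat \<Rightarrow> ('o2, 'h2, 'v2) sqcat \<Rightarrow>
   ('o1 \<Rightarrow> 'o2) \<Rightarrow> ('h1 \<Rightarrow> 'h2) \<Rightarrow> ('v1 \<Rightarrow> 'v2) \<Rightarrow> bool" where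
  "sq_functor C D Fo Fh Fv \<longleftrightarrow>
     (\<forall>A\<in>Ob C. Fo A \<in> Ob D) \<and>
     (\<forall>f\<in>Hor C. Fh f \<in> Hor D \<and> hdom D (Fh f) = Fo (hdom C f) \<and> hcod D (Fh f) = Fo (hcod C f)) \<and>
     (\<forall>u\<in>Ver C. Fv u \<in> Ver D \<and> vdom D (Fv u) = Fo (vdom C u) \<and> vcod D (Fv u) = Fo (vcod C u)) \<and>
     (\<forall>A\<in>Ob C. Fh (hid C A) = hid D (Fo A) \<and> Fv (vid C A) = vid D (Fo A)) \<and>
     (\<forall>f\<in>Hor C. \<forall>g\<in>Hor C. hcod C f = hdom C g \<longrightarrow> Fh (hcomp C g f) = hcomp D (Fh g) (Fh f)) \<and>
     (\<forall>u\<in>Ver C. \<forall>w\<in>Ver C. vcod C u = vdom C w \<longrightarrow> Fv (vcomp C w u) = vcomp D (Fv w) (Fv u)) \<and>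
     (\<forall>t l r b. Sq C t l r b \<longrightarrow> Sq D (Fh t) (Fv l) (Fv r) (Fh b)) \<and>
     Fo (Zero C) = Zero D"

definition vertical_nat_trans ::
  "('o1, 'h1, 'v1) sqcat \<Rightarrow> ('o2, 'h2, 'v2) sqcat \<Rightarrow>
   ('o1 \<Rightarrow> 'o2) \<Rightarrow> ('h1 \<Rightarrow> 'h2) \<Rightarrow> ('v1 \<Rightarrow> 'v2) \<Rightarrow>
   ('o1 \<Rightarrow> 'o2) \<Rightarrow> ('h1 \<Rightarrow> 'h2) \<Rightarrow> ('v1 \<Rightarrow> 'v2) \<Rightarrow> ('o1 \<Rightarrow> 'v2) \<Rightarrow> bool" where
  "vertical_nat_trans C D Fo Fh Fv Go Gh Gv \<eta> \<longleftrightarrow>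
     (\<forall>A\<in>Ob C. \<eta> A \<in> Ver D \<and> vdom D (\<eta> A) = Fo A \<and> vcod D (\<eta> A) = Go A) \<and>
     (\<forall>f\<in>Hor C. Sq D (Fh f) (\<eta> (hdom C f)) (\<eta> (hcod C f)) (Gh f)) \<and>
     (\<forall>u\<in>Ver C. vcomp D (\<eta> (vcod C u)) (Fv u) = vcomp D (Gv u) (\<eta> (vdom C u)))"

definition horizontal_nat_trans ::
  "('o1, 'h1, 'v1) sqcat \<Rightarrow> ('o2, 'h2, 'v2) sqcat \<Rightarrow>
   ('o1 \<Rightarrow> 'o2) \<Rightarrow> ('h1 \<Rightarrow> 'h2) \<Rightarrow> ('v1 \<Rightarrow> 'v2) \<Rightarrow>
   ('o1 \<Rightarrow> 'o2) \<Rightarrow> ('h1 \<Rightarrow> 'h2) \<Rightarrow> ('v1 \<Rightarrow> 'v2) \<Rightarrow> ('o1 \<Rightarrow> 'h2) \<Rightarrow> bool" where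
  "horizontal_nat_trans C D Fo Fh Fv Go Gh Gv \<eta> \<longleftrightarrow>
     (\<forall>A\<in>Ob C. \<eta> A \<in> Hor D \<and> hdom D (\<eta> A) = Fo A \<and> hcod D (\<eta> A) = Go A) \<and>
     (\<forall>u\<in>Ver C. Sq D (\<eta> (vdom C u)) (Fv u) (Gv u) (\<eta> (vcod C u))) \<and>
     (\<forall>f\<in>Hor C. hcomp D (\<eta> (hcod C f)) (Fh f) = hcomp D (Gh f) (\<eta> (hdom C f)))"

end

theory Submission
  imports Defs
begin

lemma is_category_idm:
  assumes "is_category Obs M dm cd cmp idm" and "A \<in> Obs"
  shows "idm A \<in> M" and "dm (idm A) = A" and "cd (idm A) = A"
  using assms unfolding is_category_def by blast+

lemma squares_category_horizontal:
  "squares_category C \<Longrightarrow> is_category (Ob C) (Hor C) (hdom C) (hcod C) (hcomp C) (hid C)"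
  unfolding squares_category_def by blast

lemma squares_category_vertical:
  "squares_category C \<Longrightarrow> is_category (Ob C) (Ver C) (vdom C) (vcod C) (vcomp C) (vid C)"
  unfolding squares_category_def by blast

lemma squares_category_Zero: "squares_category C \<Longrightarrow> Zero C \<in> Ob C"
  unfolding squares_category_def by blast

lemma init_h_ex1:
  "squares_category C \<Longrightarrow> A \<in> Ob C \<Longrightarrow> \<exists>!f. f \<in> Hor C \<and> hdom C f = Zero C \<and> hcod C f = A"
  unfolding squares_category_def by (elim conjE) (rule bspec)

lemma term_v_ex1:
  "squares_category C \<Longrightarrow> A \<in> Ob C \<Longrightarrow> \<exists>!f. f \<in> Ver C \<and> vdom C f = A \<and> vcod C f = Zero C"
  unfolding squares_category_def by (elim conjE) (rule bspec)

lemma init_h: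
  assumes "squares_category C" and "A \<in> Ob C"
  shows "init_h C A \<in> Hor C \<and> hdom C (init_h C A) = Zero C \<and> hcod C (init_h C A) = A"
  unfolding init_h_def using init_h_ex1[OF assms] by (rule theI')

lemma init_h_unique:
  assumes "squares_category C" and "f \<in> Hor C" and "hdom C f = Zero C"
  shows "init_h C (hcod C f) = f"
  unfolding init_h_def
proof (rule the1_equality)
  have "hcod C f \<in> Ob C"
    using assms squares_category_horizontal unfolding is_category_def by blast
  then show "\<exists>!g. g \<in> Hor C \<and> hdom C g = Zero C \<and> hcod C g = hcod C f"
    using init_h_ex1[OF assms(1)] by blast
qed (use assms in blast)

lemma term_v:
  assumes "squares_category C" and "A \<in> Ob C"
  shows "term_v C A \<in> Ver C \<and> vdom C (term_v C A) = A \<and> vcod C (term_v C A) = Zero C"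
  unfolding term_v_def using term_v_ex1[OF assms] by (rule theI')

lemma term_v_unique:
  assumes "squares_category C" and "u \<in> Ver C" and "vcod C u = Zero C"
  shows "term_v C (vdom C u) = u"
  unfolding term_v_def
proof (rule the1_equality)
  have "vdom C u \<in> Ob C"
    using assms squares_category_vertical unfolding is_category_def by blast
  then show "\<exists>!w. w \<in> Ver C \<and> vdom C w = vdom C u \<and> vcod C w = Zero C"
    using term_v_ex1[OF assms(1)] by blast
qed (use assms in blast)

lemma init_h_Zero: "squares_category C \<Longrightarrow> init_h C (Zero C) = hid C (Zero C)"
  using init_h_unique[of C "hid C (Zero C)"]
    is_category_idm[OF squares_category_horizontal squares_category_Zero] by metis

lemma term_v_Zero: "squares_category C \<Longrightarrow> term_v C (Zero C) = vid C (Zero C)"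
  using term_v_unique[of C "vid C (Zero C)"]
    is_category_idm[OF squares_category_vertical squares_category_Zero] by metis

lemma sq_functor_init_h:
  assumes "squares_category C" and "squares_category D"
    and "sq_functor C D Fo Fh Fv" and "A \<in> Ob C"
  shows "Fh (init_h C A) = init_h D (Fo A)"
proof -
  let ?f = "init_h C A"
  have "Fh ?f \<in> Hor D" "hdom D (Fh ?f) = Zero D" "hcod D (Fh ?f) = Fo A"
    using assms(3) init_h[OF assms(1,4)] unfolding sq_functor_def by auto
  then show ?thesis using init_h_unique[OF assms(2)] by metis
qed

lemma sq_functor_term_v:
  assumes "squares_category C" and "squares_category D"
    and "sq_functor C D Fo Fh Fv" and "A \<in> Ob C"
  shows "Fv (term_v C A) = term_v D (Fo A)"
proof -
  let ?u = "term_v C A"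
  have "Fv ?u \<in> Ver D" "vdom D (Fv ?u) = Fo A" "vcod D (Fv ?u) = Zero D"
    using assms(3) term_v[OF assms(1,4)] unfolding sq_functor_def by auto
  then show ?thesis using term_v_unique[OF assms(2)] by metis
qed

text \<open>A component at the distinguished object goes from O to O, and the only such vertical
  (horizontal) morphism is the identity, since O is vertically terminal (horizontally initial).\<close>

lemma vertical_nat_trans_Zero:
  assumes "squares_category C" and "squares_category D"
    and "sq_functor C D Fo Fh Fv" and "sq_functor C D Go Gh Gv"
    and "vertical_nat_trans C D Fo Fh Fv Go Gh Gv \<eta>"
  shows "\<eta> (Zero C) = vid D (Zero D)"
proof -
  have "\<eta> (Zero C) \<in> Ver D" "vdom D (\<eta> (Zero C)) = Zero D" "vcod D (\<eta> (Zero C)) = Zero D"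
    using assms(3-5) squares_category_Zero[OF assms(1)]
    unfolding vertical_nat_trans_def sq_functor_def by auto
  then show ?thesis using term_v_unique[OF assms(2)] term_v_Zero[OF assms(2)] by metis
qed

lemma horizontal_nat_trans_Zero:
  assumes "squares_category C" and "squares_category D"
    and "sq_functor C D Fo Fh Fv" and "sq_functor C D Go Gh Gv"
    and "horizontal_nat_trans C D Fo Fh Fv Go Gh Gv \<eta>"
  shows "\<eta> (Zero C) = hid D (Zero D)"
proof -
  have "\<eta> (Zero C) \<in> Hor D" "hdom D (\<eta> (Zero C)) = Zero D" "hcod D (\<eta> (Zero C)) = Zero D"
    using assms(3-5) squares_category_Zero[OF assms(1)]
    unfolding horizontal_nat_trans_def sq_functor_def by auto
  then show ?thesis using init_h_unique[OF assms(2)] init_h_Zero[OF assms(2)] by metis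
qed

text \<open>The naturality square of \<eta> at the unique morphism O \<rightarrowtail> A (resp. A \<twoheadrightarrow> O)
  is exactly the square defining a weak equivalence.\<close>

lemma vertical_nat_trans_component_weq:
  assumes "squares_category C" and "squares_category D"
    and "sq_functor C D Fo Fh Fv" and "sq_functor C D Go Gh Gv"
    and "vertical_nat_trans C D Fo Fh Fv Go Gh Gv \<eta>" and "A \<in> Ob C"
  shows "vertical_weq D (\<eta> A)"
proof -
  let ?f = "init_h C A"
  have f: "?f \<in> Hor C" "hdom C ?f = Zero C" "hcod C ?f = A"
    using init_h[OF assms(1,6)] by auto
  have \<eta>A: "\<eta> A \<in> Ver D" "vdom D (\<eta> A) = Fo A" "vcod D (\<eta> A) = Go A"
    using assms(5,6) unfolding vertical_nat_trans_def by auto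
  have "Sq D (Fh ?f) (\<eta> (Zero C)) (\<eta> A) (Gh ?f)"
    using assms(5) f unfolding vertical_nat_trans_def by metis
  then show ?thesis
    unfolding vertical_weq_def \<eta>A
    using \<eta>A(1) vertical_nat_trans_Zero[OF assms(1-5)]
      sq_functor_init_h[OF assms(1,2,3,6)] sq_functor_init_h[OF assms(1,2,4,6)] by simp
qed

lemma horizontal_nat_trans_component_weq:
  assumes "squares_category C" and "squares_category D"
    and "sq_functor C D Fo Fh Fv" and "sq_functor C D Go Gh Gv"
    and "horizontal_nat_trans C D Fo Fh Fv Go Gh Gv \<eta>" and "A \<in> Ob C"
  shows "horizontal_weq D (\<eta> A)"
proof -
  let ?u = "term_v C A"
  have u: "?u \<in> Ver C" "vdom C ?u = A" "vcod C ?u = Zero C"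
    using term_v[OF assms(1,6)] by auto
  have \<eta>A: "\<eta> A \<in> Hor D" "hdom D (\<eta> A) = Fo A" "hcod D (\<eta> A) = Go A"
    using assms(5,6) unfolding horizontal_nat_trans_def by auto
  have "Sq D (\<eta> A) (Fv ?u) (Gv ?u) (\<eta> (Zero C))"
    using assms(5) u unfolding horizontal_nat_trans_def by metis
  then show ?thesis
    unfolding horizontal_weq_def \<eta>A
    using \<eta>A(1) horizontal_nat_trans_Zero[OF assms(1-5)]
      sq_functor_term_v[OF assms(1,2,3,6)] sq_functor_term_v[OF assms(1,2,4,6)] by simp
qed

theorem propositionA1:
  fixes C :: "('o1, 'h1, 'v1) sqcat" and D :: "('o2, 'h2, 'v2) sqcat"
    and Fo Go :: "'o1 \<Rightarrow> 'o2" and Fh Gh :: "'h1 \<Rightarrow> 'h2" and Fv Gv :: "'v1 \<Rightarrow> 'v2"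
  assumes "squares_category C" and "squares_category D"
    and "sq_functor C D Fo Fh Fv" and "sq_functor C D Go Gh Gv"
  shows "(\<forall>\<eta>. vertical_nat_trans C D Fo Fh Fv Go Gh Gv \<eta> \<longrightarrow>
            (\<forall>A\<in>Ob C. vertical_weq D (\<eta> A))) \<and>
         (\<forall>\<eta>. horizontal_nat_trans C D Fo Fh Fv Go Gh Gv \<eta> \<longrightarrow>
            (\<forall>A\<in>Ob C. horizontal_weq D (\<eta> A)))"
  using vertical_nat_trans_component_weq[OF assms]
    horizontal_nat_trans_component_weq[OF assms] by blast

end
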